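(* Suppose $\sigma$ is an automorphism of $D$. Then $f(t)=t^3-a\in D[t;\sigma]$ is irreducible if and only if $\sigma^2(b)\sigma(b)b\neq a$ for all $b\in D$.
   Context: $D$ is an associative division ring, $\sigma$ a ring automorphism of $D$, and $D[t;\sigma]$ the skew polynomial ring with $ta=\sigma(a)t$. A polynomial $f$ is irreducible if it is not a unit and has no factorization $f=gh$ with $\deg g,\deg h<\deg f$. *)

theory Defs
  imports "HOL-Computational_Algebra.Polynomial"
begin

definition ring_automorphism :: "('a::division_ring \<Rightarrow> 'a) \<Rightarrow> bool" where
  "ring_automorphism \<sigma> \<longleftrightarrow> bij \<sigma> \<and> (\<forall>x y. \<sigma> (x + y) = \<sigma> x + \<sigma> y)
     \<and> (\<forall>x y. \<sigma> (x * y) = \<sigma> x * \<sigma> y) \<and> \<sigma> 1 = 1"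

text \<open>Skew polynomials D[t;sigma] are represented by their coefficient sequences
  (the type 'a poly, with its additive structure, coeff and degree); the product
  uses the rule t a = sigma(a) t, i.e.
  (sum a_i t^i)(sum b_j t^j) = sum a_i sigma^i(b_j) t^(i+j).\<close>
definition skew_mult :: "('a::division_ring \<Rightarrow> 'a) \<Rightarrow> 'a poly \<Rightarrow> 'a poly \<Rightarrow> 'a poly" where
  "skew_mult \<sigma> p q = (\<Sum>i\<le>degree p. \<Sum>j\<le>degree q.
       monom (coeff p i * (\<sigma> ^^ i) (coeff q j)) (i + j))"

definition skew_unit :: "('a::division_ring \<Rightarrow> 'a) \<Rightarrow> 'a poly \<Rightarrow> bool" where
  "skew_unit \<sigma> f \<longleftrightarrow> (\<exists>g. skew_mult \<sigma> f g = [:1:] \<and> skew_mult \<sigma> g f = [:1:])"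

definition skew_irreducible :: "('a::division_ring \<Rightarrow> 'a) \<Rightarrow> 'a poly \<Rightarrow> bool" where
  "skew_irreducible \<sigma> f \<longleftrightarrow> \<not> skew_unit \<sigma> f \<and>
     \<not> (\<exists>g h. f = skew_mult \<sigma> g h \<and> degree g < degree f \<and> degree h < degree f)"

end

theory Submission
  imports Defs
begin

text \<open>Since \<sigma> is injective, degrees add in D[t;\<sigma>]. Hence t^3 - a is not a unit, and a
  proper factorization of it has a linear right or left factor. A right factor t - b exists exactly
  when \<sigma>^2(b)\<sigma>(b)b = a, because
  (t^2 + \<sigma>^2(b) t + \<sigma>^2(b)\<sigma>(b)) (t - b) = t^3 - \<sigma>^2(b)\<sigma>(b)b.
  A monic left factor t - c forces a = c \<sigma>^-1(c) \<sigma>^-2(c), which is the same condition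
  for b = \<sigma>^-2(c); this is where surjectivity of \<sigma> is used.\<close>

lemma ring_automorphismD:
  assumes "ring_automorphism \<sigma>"
  shows "bij \<sigma>" "\<sigma> (x + y) = \<sigma> x + \<sigma> y" "\<sigma> (x * y) = \<sigma> x * \<sigma> y" "\<sigma> 1 = 1"
  using assms unfolding ring_automorphism_def by auto

lemma ring_automorphism_inj: "ring_automorphism \<sigma> \<Longrightarrow> inj \<sigma>"
  using ring_automorphismD(1) bij_is_inj by blast

lemma ring_automorphism_surj: "ring_automorphism \<sigma> \<Longrightarrow> surj \<sigma>"
  using ring_automorphismD(1) bij_is_surj by blast

lemma ring_automorphism_zero: "ring_automorphism \<sigma> \<Longrightarrow> \<sigma> 0 = 0"
  using ring_automorphismD(2)[of \<sigma> 0 0] by simp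

lemma ring_automorphism_minus:
  assumes "ring_automorphism \<sigma>"
  shows "\<sigma> (- x) = - \<sigma> x"
  using ring_automorphismD(2)[OF assms, of x "- x"] ring_automorphism_zero[OF assms]
  by (metis add.right_inverse minus_unique)

lemma funpow_fixed_zero:
  fixes \<sigma> :: "'a::zero \<Rightarrow> 'a"
  shows "\<sigma> 0 = 0 \<Longrightarrow> (\<sigma> ^^ n) 0 = 0"
  by (induction n) auto

lemma funpow_eq_zero_iff:
  fixes \<sigma> :: "'a::zero \<Rightarrow> 'a"
  assumes "inj \<sigma>" "\<sigma> 0 = 0"
  shows "(\<sigma> ^^ n) x = 0 \<longleftrightarrow> x = 0"
  using inj_fn[OF assms(1), of n] funpow_fixed_zero[of \<sigma> n] assms(2) by (metis injD)

lemma degree_le_1_cases: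
  assumes "degree p \<le> 1"
  obtains p0 p1 where "p = [:p0, p1:]"
proof
  show "p = [:coeff p 0, coeff p 1:]"
    using assms by (intro poly_eqI) (auto simp: coeff_pCons coeff_eq_0 split: nat.split)
qed

lemma degree_le_2_cases:
  assumes "degree p \<le> 2"
  obtains p0 p1 p2 where "p = [:p0, p1, p2:]"
proof
  show "p = [:coeff p 0, coeff p 1, coeff p 2:]"
    using assms
    by (intro poly_eqI) (auto simp: coeff_pCons coeff_eq_0 numeral_2_eq_2 split: nat.split)
qed

lemma coeff_skew_mult:
  "coeff (skew_mult \<sigma> p q) k = (\<Sum>i\<le>degree p. \<Sum>j\<le>degree q.
     if i + j = k then coeff p i * (\<sigma> ^^ i) (coeff q j) else 0)"
  unfolding skew_mult_def by (simp add: coeff_sum)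

lemma coeff_skew_mult_bounded:
  assumes "\<sigma> 0 = 0" "degree p \<le> m" "degree q \<le> n"
  shows "coeff (skew_mult \<sigma> p q) k = (\<Sum>i\<le>m. \<Sum>j\<le>n.
     if i + j = k then coeff p i * (\<sigma> ^^ i) (coeff q j) else 0)"
proof -
  have inner: "(\<Sum>j\<le>degree q. if i + j = k then coeff p i * (\<sigma> ^^ i) (coeff q j) else 0)
      = (\<Sum>j\<le>n. if i + j = k then coeff p i * (\<sigma> ^^ i) (coeff q j) else 0)" for i
    by (rule sum.mono_neutral_left)
      (use assms in \<open>auto simp: coeff_eq_0 funpow_fixed_zero\<close>)
  show ?thesis
    unfolding coeff_skew_mult inner
    by (rule sum.mono_neutral_left)
      (use assms in \<open>auto intro!: sum.neutral simp: coeff_eq_0\<close>)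
qed

lemma skew_mult_zero_left [simp]: "skew_mult \<sigma> 0 q = 0"
  unfolding skew_mult_def by simp

lemma skew_mult_zero_right: "\<sigma> 0 = 0 \<Longrightarrow> skew_mult \<sigma> p 0 = 0"
  unfolding skew_mult_def by (simp add: funpow_fixed_zero)

lemma coeff_skew_mult_degree:
  "coeff (skew_mult \<sigma> p q) (degree p + degree q) = lead_coeff p * (\<sigma> ^^ degree p) (lead_coeff q)"
proof -
  have "(\<Sum>j\<le>degree q. if i + j = degree p + degree q then coeff p i * (\<sigma> ^^ i) (coeff q j) else 0)
      = (if i = degree p then lead_coeff p * (\<sigma> ^^ degree p) (lead_coeff q) else 0)"
    if "i \<le> degree p" for i
    using that by (cases "i = degree p") (auto intro!: sum.neutral)
  then show ?thesis unfolding coeff_skew_mult by simp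
qed

lemma degree_skew_mult:
  assumes "inj \<sigma>" "\<sigma> 0 = 0" "p \<noteq> 0" "q \<noteq> 0"
  shows "degree (skew_mult \<sigma> p q) = degree p + degree q"
proof (rule antisym)
  show "degree (skew_mult \<sigma> p q) \<le> degree p + degree q"
    by (rule degree_le) (auto simp: coeff_skew_mult intro!: sum.neutral)
  have "coeff (skew_mult \<sigma> p q) (degree p + degree q) \<noteq> 0"
    using assms by (simp add: coeff_skew_mult_degree funpow_eq_zero_iff)
  then show "degree p + degree q \<le> degree (skew_mult \<sigma> p q)"
    by (rule le_degree)
qed

lemma not_skew_unit_if_degree_nonzero:
  assumes "inj \<sigma>" "\<sigma> 0 = 0" "degree f \<noteq> 0"
  shows "\<not> skew_unit \<sigma> f"
proof
  assume "skew_unit \<sigma> f"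
  then obtain g where fg: "skew_mult \<sigma> f g = [:1:]"
    unfolding skew_unit_def by blast
  then have "g \<noteq> 0"
    using assms(2) by (auto simp: skew_mult_zero_right)
  moreover have "f \<noteq> 0"
    using assms(3) by auto
  ultimately have "degree (skew_mult \<sigma> f g) = degree f + degree g"
    using assms degree_skew_mult by blast
  then show False
    using fg assms(3) by simp
qed

lemma skew_mult_quadratic:
  assumes "\<sigma> 0 = 0"
  shows "skew_mult \<sigma> [:g0, g1, g2:] [:h0, h1, h2:] =
    [:g0 * h0, g0 * h1 + g1 * \<sigma> h0, g0 * h2 + g1 * \<sigma> h1 + g2 * \<sigma> (\<sigma> h0),
      g1 * \<sigma> h2 + g2 * \<sigma> (\<sigma> h1), g2 * \<sigma> (\<sigma> h2):]"
  (is "?lhs = ?rhs")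
proof (rule poly_eqI)
  fix k
  have "k \<le> 4 \<or> k > (4::nat)"
    by arith
  then show "coeff ?lhs k = coeff ?rhs k"
    by (subst coeff_skew_mult_bounded[where m = 2 and n = 2])
      (auto simp: assms numeral_2_eq_2 coeff_pCons le_Suc_eq split: nat.split)
qed

lemma skew_mult_linear_right:
  assumes "\<sigma> 0 = 0"
  shows "skew_mult \<sigma> [:g0, g1, g2:] [:h0, h1:] =
    [:g0 * h0, g0 * h1 + g1 * \<sigma> h0, g1 * \<sigma> h1 + g2 * \<sigma> (\<sigma> h0), g2 * \<sigma> (\<sigma> h1):]"
  using skew_mult_quadratic[of \<sigma> g0 g1 g2 h0 h1 0] assms by simp

lemma skew_mult_linear_left:
  assumes "\<sigma> 0 = 0"
  shows "skew_mult \<sigma> [:g0, g1:] [:h0, h1, h2:] =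
    [:g0 * h0, g0 * h1 + g1 * \<sigma> h0, g0 * h2 + g1 * \<sigma> h1, g1 * \<sigma> h2:]"
  using skew_mult_quadratic[of \<sigma> g0 g1 0 h0 h1 h2] assms by simp

lemma cubic_eq_pCons:
  fixes a :: "'a::ring_1"
  shows "monom 1 3 - [:a:] = [:- a, 0, 0, 1:]"
  by (simp add: numeral_3_eq_3 monom_Suc monom_0)

lemma degree_cubic:
  fixes a :: "'a::ring_1"
  shows "degree (monom 1 3 - [:a:]) = 3"
  by (simp add: cubic_eq_pCons)

lemma skew_cubic_eq_skew_mult_linear:
  assumes "ring_automorphism \<sigma>"
  shows "monom 1 3 - [:\<sigma> (\<sigma> b) * \<sigma> b * b:] =
    skew_mult \<sigma> [:\<sigma> (\<sigma> b) * \<sigma> b, \<sigma> (\<sigma> b), 1:] [:- b, 1:]"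
  using assms
  by (simp add: skew_mult_linear_right ring_automorphism_zero ring_automorphism_minus
      ring_automorphismD(3,4) cubic_eq_pCons mult.assoc)

lemma skew_cubic_right_linear_factorD:
  assumes \<sigma>: "ring_automorphism \<sigma>"
    and factor: "monom 1 3 - [:a:] = skew_mult \<sigma> [:g0, g1, g2:] [:h0, h1:]"
  shows "\<exists>b. \<sigma> (\<sigma> b) * \<sigma> b * b = a"
proof -
  have e0: "g0 * h0 = - a" and e1: "g0 * h1 + g1 * \<sigma> h0 = 0"
    and e2: "g1 * \<sigma> h1 + g2 * \<sigma> (\<sigma> h0) = 0" and e3: "g2 * \<sigma> (\<sigma> h1) = 1"
    using factor
    by (simp_all add: skew_mult_linear_right ring_automorphism_zero[OF \<sigma>] cubic_eq_pCons)
  have "h1 \<noteq> 0"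
    using e3 ring_automorphism_zero[OF \<sigma>] by auto
  define b where "b = - (inverse h1 * h0)"
  have h0: "h0 = - (h1 * b)"
    unfolding b_def using \<open>h1 \<noteq> 0\<close> by (simp add: mult.assoc[symmetric])
  have "g1 * \<sigma> h1 = - (g2 * \<sigma> (\<sigma> h0))"
    using e2 by (simp add: eq_neg_iff_add_eq_0)
  also have "\<dots> = g2 * \<sigma> (\<sigma> h1) * \<sigma> (\<sigma> b)"
    unfolding h0 using \<sigma> by (simp add: ring_automorphism_minus ring_automorphismD(3) mult.assoc)
  finally have g1h1: "g1 * \<sigma> h1 = \<sigma> (\<sigma> b)"
    using e3 by simp
  have "g0 * h1 = - (g1 * \<sigma> h0)"
    using e1 by (simp add: eq_neg_iff_add_eq_0)
  also have "\<dots> = g1 * \<sigma> h1 * \<sigma> b"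
    unfolding h0 using \<sigma> by (simp add: ring_automorphism_minus ring_automorphismD(3) mult.assoc)
  finally have "g0 * h1 = \<sigma> (\<sigma> b) * \<sigma> b"
    using g1h1 by simp
  moreover have "a = g0 * h1 * b"
    using e0 unfolding h0 by (simp add: mult.assoc)
  ultimately show ?thesis
    by auto
qed

lemma skew_cubic_left_linear_factorD:
  assumes \<sigma>: "ring_automorphism \<sigma>"
    and factor: "monom 1 3 - [:a:] = skew_mult \<sigma> [:g0, g1:] [:h0, h1, h2:]"
  shows "\<exists>b. \<sigma> (\<sigma> b) * \<sigma> b * b = a"
proof -
  have e0: "g0 * h0 = - a" and e1: "g0 * h1 + g1 * \<sigma> h0 = 0"
    and e2: "g0 * h2 + g1 * \<sigma> h1 = 0" and e3: "g1 * \<sigma> h2 = 1"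
    using factor
    by (simp_all add: skew_mult_linear_left ring_automorphism_zero[OF \<sigma>] cubic_eq_pCons)
  have inj: "inj \<sigma>" and surj: "surj \<sigma>" and mult: "\<And>x y. \<sigma> (x * y) = \<sigma> x * \<sigma> y"
    using ring_automorphism_inj[OF \<sigma>] ring_automorphism_surj[OF \<sigma>] ring_automorphismD(3)[OF \<sigma>]
    by blast+
  obtain k where k: "\<sigma> k = g1"
    using surj by (metis surjD)
  have "\<sigma> (k * h2) = \<sigma> 1"
    using e3 k mult ring_automorphismD(4)[OF \<sigma>] by simp
  then have kh2: "k * h2 = 1"
    by (rule injD[OF inj])
  then have "k \<noteq> 0" and "inverse k = h2"
    by (auto intro: inverse_unique)
  then have h2k: "h2 * k = 1"
    by auto
  \<comment> \<open>g = (t - c) k with c = - g0 h2, and the witness is b = \<sigma>^-2(c)\<close>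
  obtain b where b: "\<sigma> b = k * h1"
    using surj by (metis surjD)
  have ssb: "\<sigma> (\<sigma> b) = - (g0 * h2)"
    using e2 b k mult by (simp add: eq_neg_iff_add_eq_0 add.commute)
  have "\<sigma> (\<sigma> b * b) = \<sigma> (\<sigma> b) * \<sigma> b"
    by (rule mult)
  also have "\<dots> = - (g0 * (h2 * k) * h1)"
    using ssb b by (simp add: mult.assoc)
  also have "\<dots> = \<sigma> (k * h0)"
    using h2k e1 k mult by (simp add: neg_eq_iff_add_eq_0)
  finally have "\<sigma> b * b = k * h0"
    by (rule injD[OF inj])
  then have "\<sigma> (\<sigma> b) * \<sigma> b * b = - (g0 * (h2 * k) * h0)"
    using ssb by (simp add: mult.assoc)
  then show ?thesis
    using h2k e0 by auto
qed

lemma skew_cubic_factorization_iff: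
  assumes \<sigma>: "ring_automorphism \<sigma>"
  shows "(\<exists>g h. monom 1 3 - [:a:] = skew_mult \<sigma> g h \<and> degree g < 3 \<and> degree h < 3)
    \<longleftrightarrow> (\<exists>b. \<sigma> (\<sigma> b) * \<sigma> b * b = a)"
proof
  assume "\<exists>g h. monom 1 3 - [:a:] = skew_mult \<sigma> g h \<and> degree g < 3 \<and> degree h < 3"
  then obtain g h where factor: "monom 1 3 - [:a:] = skew_mult \<sigma> g h"
    and "degree g < 3" "degree h < 3"
    by blast
  have zero: "\<sigma> 0 = 0"
    using ring_automorphism_zero[OF \<sigma>] .
  have "g \<noteq> 0" "h \<noteq> 0"
    using factor zero by (auto simp: cubic_eq_pCons skew_mult_zero_right)
  then have "degree g + degree h = 3"
    using factor degree_skew_mult[OF ring_automorphism_inj[OF \<sigma>] zero] degree_cubic[of a]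
    by simp
  then consider "degree g \<le> 1" "degree h \<le> 2" | "degree g \<le> 2" "degree h \<le> 1"
    using \<open>degree g < 3\<close> \<open>degree h < 3\<close> by linarith
  then show "\<exists>b. \<sigma> (\<sigma> b) * \<sigma> b * b = a"
  proof cases
    case 1
    then obtain g0 g1 h0 h1 h2 where "g = [:g0, g1:]" "h = [:h0, h1, h2:]"
      by (elim degree_le_1_cases degree_le_2_cases)
    then show ?thesis
      using factor skew_cubic_left_linear_factorD[OF \<sigma>] by blast
  next
    case 2
    then obtain g0 g1 g2 h0 h1 where "g = [:g0, g1, g2:]" "h = [:h0, h1:]"
      by (elim degree_le_1_cases degree_le_2_cases)
    then show ?thesis
      using factor skew_cubic_right_linear_factorD[OF \<sigma>] by blast
  qed
next
  assume "\<exists>b. \<sigma> (\<sigma> b) * \<sigma> b * b = a"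
  then obtain b where "\<sigma> (\<sigma> b) * \<sigma> b * b = a"
    by blast
  then have "monom 1 3 - [:a:] = skew_mult \<sigma> [:\<sigma> (\<sigma> b) * \<sigma> b, \<sigma> (\<sigma> b), 1:] [:- b, 1:]"
    using skew_cubic_eq_skew_mult_linear[OF \<sigma>] by blast
  then show "\<exists>g h. monom 1 3 - [:a:] = skew_mult \<sigma> g h \<and> degree g < 3 \<and> degree h < 3"
    by fastforce
qed

theorem mainTheorem14:
  fixes \<sigma> :: "'a::division_ring \<Rightarrow> 'a" and a :: 'a
  assumes "ring_automorphism \<sigma>"
  shows "skew_irreducible \<sigma> (monom 1 3 - [:a:]) \<longleftrightarrow>
         (\<forall>b. \<sigma> (\<sigma> b) * \<sigma> b * b \<noteq> a)"
proof -
  have "\<not> skew_unit \<sigma> (monom 1 3 - [:a:])"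
    using assms degree_cubic[of a]
    by (simp add: not_skew_unit_if_degree_nonzero ring_automorphism_inj ring_automorphism_zero)
  then show ?thesis
    unfolding skew_irreducible_def degree_cubic
    using skew_cubic_factorization_iff[OF assms] by auto
qed

end
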